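(* Let $\mathcal C$ be a concept hierarchy with maximum level $\ell_{max}$ and let $r_1,r_2\in[0,1]$ with $r_1\le r_2$. Let $\mathcal N$ be a network with maximum layer $\ell_{max}$ in which every concept $c\in C_\ell$ is assigned a neuron $rep(c)\in N_\ell$, with distinct concepts assigned distinct neurons (for $c\in C_0$, $rep(c)$ is the input neuron given by the bijection $rep$); let $R=rep(C)$ and $rep^{-1}:R\to C$ its inverse. Let the weight of the edge from $u\in N_\ell$ to $v\in N_{\ell+1}$ be $1$ if $u,v\in R$ and $rep^{-1}(u)\in children(rep^{-1}(v))$, and $0$ otherwise; let every non-input neuron have threshold $\tau=\frac{(r_1+r_2)k}{2}$, and let all engaged flags be $0$ at all times. Then $\mathcal N$ $(r_1,r_2)$-recognizes $\mathcal C$. Moreover, the required time is $\ell_{max}$, i.e., if $B$ is presented at time $t$, every decision required by recognition takes place at a time at most $t+\ell_{max}$.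
   Context: Data model. Fix positive integers $\ell_{max},n,k$. A universal set $D$ of concepts is partitioned into disjoint sets $D_0,\dots,D_{\ell_{max}}$ with $|D_0|=n$. A concept hierarchy consists of $C\subseteq D$ and a function $children$: with $C_\ell=C\cap D_\ell$, each $c\in C_\ell$ ($1\le\ell\le\ell_{max}$) has $children(c)\subseteq C_{\ell-1}$, $|children(c)|=k$; $|C_{\ell_{max}}|=k$; distinct concepts on the same level have disjoint children sets. For $B\subseteq D_0$ and $r\in[0,1]$: $B_0=B\cap C_0$, $B_\ell=\{c\in C_\ell: |children(c)\cap B_{\ell-1}|\ge rk\}$, $supported_r(B)=\bigcup_\ell B_\ell$. Network model. Layers $N_0,\dots,N_{\ell'_{max}}$ of $n$ neurons each, complete connections from each layer to the next and no other edges, a fixed bijection $rep:D_0\to N_0$. Discrete time; input neurons' firing is set externally. A non-input neuron $u$ has potential $pot^u(t)=\sum_v weight(v,u)\,y^v(t-1)$ over the neurons $v$ of the layer below, and fires at time $t$ (i.e. $y^u(t)=1$) iff $pot^u(t)\ge\tau$; weights change only when engaged flags are $1$. $B\subseteq D_0$ is presented at time $t$ if the input neurons firing at time $t$ are exactly $rep(B)$; $layer(u)$ is the index of the layer containing $u$. Recognition. $\mathcal N$ $(r_1,r_2)$-recognizes $c\in C$ if it contains a unique neuron $rep(c)$ such that whenever $B\subseteq C_0$ is presented at time $t$: if $c\in supported_{r_2}(B)$ then $rep(c)$ fires at time $t+layer(rep(c))$, and if $c\notin supported_{r_1}(B)$ then $rep(c)$ does not fire at time $t+layer(rep(c))$.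 $\mathcal N$ recognizes $\mathcal C$ if it recognizes every $c\in C$. *)

theory Defs
  imports Complex_Main
begin

definition level_set :: "'c set \<Rightarrow> ('c \<Rightarrow> nat) \<Rightarrow> nat \<Rightarrow> 'c set" where
  "level_set A lev l = {c \<in> A. lev c = l}"

definition concept_hierarchy ::
  "nat \<Rightarrow> nat \<Rightarrow> nat \<Rightarrow> 'c set \<Rightarrow> ('c \<Rightarrow> nat) \<Rightarrow> 'c set \<Rightarrow> ('c \<Rightarrow> 'c set) \<Rightarrow> bool" where
  "concept_hierarchy lmax n k D lev C children \<longleftrightarrow>
     (\<forall>c\<in>D. lev c \<le> lmax) \<and>
     finite (level_set D lev 0) \<and> card (level_set D lev 0) = n \<and>
     C \<subseteq> D \<and>
     (\<forall>c\<in>C. 1 \<le> lev c \<longrightarrow>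
          children c \<subseteq> level_set C lev (lev c - 1) \<and> finite (children c) \<and> card (children c) = k) \<and>
     finite (level_set C lev lmax) \<and> card (level_set C lev lmax) = k \<and>
     (\<forall>c\<in>C. \<forall>d\<in>C. 1 \<le> lev c \<and> lev c = lev d \<and> c \<noteq> d \<longrightarrow> children c \<inter> children d = {})"

fun supp_level ::
  "'c set \<Rightarrow> ('c \<Rightarrow> nat) \<Rightarrow> ('c \<Rightarrow> 'c set) \<Rightarrow> nat \<Rightarrow> real \<Rightarrow> 'c set \<Rightarrow> nat \<Rightarrow> 'c set" where
  "supp_level C lev children k r B 0 = B \<inter> level_set C lev 0"
| "supp_level C lev children k r B (Suc l) =
     {c \<in> level_set C lev (Suc l).
        real (card (children c \<inter> supp_level C lev children k r B l)) \<ge> r * real k}"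

definition supported ::
  "nat \<Rightarrow> 'c set \<Rightarrow> ('c \<Rightarrow> nat) \<Rightarrow> ('c \<Rightarrow> 'c set) \<Rightarrow> nat \<Rightarrow> real \<Rightarrow> 'c set \<Rightarrow> 'c set" where
  "supported lmax C lev children k r B = (\<Union>l\<le>lmax. supp_level C lev children k r B l)"

text \<open>A neuron is a pair (layer, index); layer l consists of the n neurons (l, i), i < n.\<close>

type_synonym neuron = "nat \<times> nat"

definition layer_neurons :: "nat \<Rightarrow> nat \<Rightarrow> neuron set" where
  "layer_neurons n l = {(l, i) | i. i < n}"

definition neurons :: "nat \<Rightarrow> nat \<Rightarrow> neuron set" where
  "neurons lmax' n = (\<Union>l\<le>lmax'. layer_neurons n l)"

abbreviation layer :: "neuron \<Rightarrow> nat" where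
  "layer u \<equiv> fst u"

text \<open>An execution (firing pattern y t u) of the network with (fixed, since all engaged flags
  are 0) weights w and threshold tau. Input neurons (layer 0) are set externally, hence
  unconstrained; non-input neurons obey the threshold rule at every time t+1. The states of
  non-input neurons at time 0 are arbitrary.\<close>

definition net_run ::
  "nat \<Rightarrow> nat \<Rightarrow> (neuron \<Rightarrow> neuron \<Rightarrow> real) \<Rightarrow> real \<Rightarrow> (nat \<Rightarrow> neuron \<Rightarrow> bool) \<Rightarrow> bool" where
  "net_run lmax' n w \<tau> y \<longleftrightarrow>
     (\<forall>t. \<forall>u\<in>neurons lmax' n. 1 \<le> layer u \<longrightarrow>
        (y (Suc t) u \<longleftrightarrow>
           (\<Sum>v\<in>layer_neurons n (layer u - 1). w v u * (if y (t) v then 1 else 0)) \<ge> \<tau>))"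

definition presented :: "nat \<Rightarrow> ('c \<Rightarrow> neuron) \<Rightarrow> 'c set \<Rightarrow> (nat \<Rightarrow> neuron \<Rightarrow> bool) \<Rightarrow> nat \<Rightarrow> bool" where
  "presented n rep0 B y t \<longleftrightarrow> {u \<in> layer_neurons n 0. y t u} = rep0 ` B"

definition recognizes_via ::
  "nat \<Rightarrow> nat \<Rightarrow> (neuron \<Rightarrow> neuron \<Rightarrow> real) \<Rightarrow> real \<Rightarrow> ('c \<Rightarrow> neuron) \<Rightarrow>
   nat \<Rightarrow> nat \<Rightarrow> 'c set \<Rightarrow> ('c \<Rightarrow> nat) \<Rightarrow> ('c \<Rightarrow> 'c set) \<Rightarrow> real \<Rightarrow> real \<Rightarrow> 'c \<Rightarrow> neuron \<Rightarrow> bool" where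
  "recognizes_via lmax' n w \<tau> rep0 lmax k C lev children r1 r2 c u \<longleftrightarrow>
     u \<in> neurons lmax' n \<and>
     (\<forall>y B t. net_run lmax' n w \<tau> y \<longrightarrow> B \<subseteq> level_set C lev 0 \<longrightarrow> presented n rep0 B y t \<longrightarrow>
        (c \<in> supported lmax C lev children k r2 B \<longrightarrow> y (t + layer u) u) \<and>
        (c \<notin> supported lmax C lev children k r1 B \<longrightarrow> \<not> y (t + layer u) u))"

definition recognizes_hierarchy ::
  "nat \<Rightarrow> nat \<Rightarrow> (neuron \<Rightarrow> neuron \<Rightarrow> real) \<Rightarrow> real \<Rightarrow> ('c \<Rightarrow> neuron) \<Rightarrow>
   nat \<Rightarrow> nat \<Rightarrow> 'c set \<Rightarrow> ('c \<Rightarrow> nat) \<Rightarrow> ('c \<Rightarrow> 'c set) \<Rightarrow> real \<Rightarrow> real \<Rightarrow> bool" where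
  "recognizes_hierarchy lmax' n w \<tau> rep0 lmax k C lev children r1 r2 \<longleftrightarrow>
     (\<forall>c\<in>C. \<exists>u. recognizes_via lmax' n w \<tau> rep0 lmax k C lev children r1 r2 c u)"

definition hier_weight :: "'c set \<Rightarrow> ('c \<Rightarrow> 'c set) \<Rightarrow> ('c \<Rightarrow> neuron) \<Rightarrow> neuron \<Rightarrow> neuron \<Rightarrow> real" where
  "hier_weight C children rep u v =
     (if layer v = layer u + 1 \<and> u \<in> rep ` C \<and> v \<in> rep ` C \<and>
         the_inv_into C rep u \<in> children (the_inv_into C rep v) then 1 else 0)"

end

theory Submission
  imports Defs
begin

text \<open>The potential of rep c is exactly the number of children of c whose neurons fired one
  step earlier. Hence, by induction on the level l, if B is presented at time t then at time t + l
  the neuron rep c of a level-l concept c fires whenever c is r-supported and the threshold is at most r k,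
  and fires only if c is r-supported when the threshold is at least r k. Any threshold between
  r1 k and r2 k, in particular the midpoint, therefore gives (r1, r2)-recognition.\<close>

lemma finite_layer_neurons: "finite (layer_neurons n l)"
proof -
  have "layer_neurons n l = Pair l ` {..<n}"
    unfolding layer_neurons_def by auto
  then show ?thesis by simp
qed

lemma supp_level_subset_level_set: "supp_level C lev children k r B l \<subseteq> level_set C lev l"
  by (cases l) (auto simp: level_set_def)

lemma mem_supported_iff:
  assumes "c \<in> C" and "lev c \<le> lmax"
  shows "c \<in> supported lmax C lev children k r B \<longleftrightarrow> c \<in> supp_level C lev children k r B (lev c)"
  using assms supp_level_subset_level_set unfolding supported_def level_set_def by fastforce

locale hierarchy_network =
  fixes lmax n k :: nat and D C :: "'c set" and lev :: "'c \<Rightarrow> nat"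
    and children :: "'c \<Rightarrow> 'c set" and rep0 rep :: "'c \<Rightarrow> neuron"
  assumes hierarchy: "concept_hierarchy lmax n k D lev C children"
    and rep0_bij: "bij_betw rep0 (level_set D lev 0) (layer_neurons n 0)"
    and rep_layer: "\<forall>c\<in>C. rep c \<in> layer_neurons n (lev c)"
    and rep_inj: "inj_on rep C"
    and rep_input: "\<forall>c\<in>level_set C lev 0. rep c = rep0 c"
begin

lemma lev_le_lmax: "c \<in> C \<Longrightarrow> lev c \<le> lmax"
  using hierarchy unfolding concept_hierarchy_def by auto

lemma layer_rep: "c \<in> C \<Longrightarrow> layer (rep c) = lev c"
  using rep_layer unfolding layer_neurons_def by auto

lemma rep_in_neurons: "c \<in> C \<Longrightarrow> rep c \<in> neurons lmax n"
  using rep_layer lev_le_lmax unfolding neurons_def by auto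

lemma children_level_set:
  assumes "c \<in> C" and "lev c = Suc l"
  shows "children c \<subseteq> level_set C lev l" and "finite (children c)"
proof -
  have "\<forall>c\<in>C. 1 \<le> lev c \<longrightarrow> children c \<subseteq> level_set C lev (lev c - 1) \<and> finite (children c)"
    using hierarchy unfolding concept_hierarchy_def by blast
  moreover have "1 \<le> lev c"
    using assms(2) by simp
  ultimately have "children c \<subseteq> level_set C lev (lev c - 1) \<and> finite (children c)"
    using assms(1) by blast
  with assms show "children c \<subseteq> level_set C lev l" and "finite (children c)"
    by simp_all
qed

lemma hier_weight_rep:
  assumes c: "c \<in> C" "lev c = Suc l" and v: "v \<in> layer_neurons n l"
  shows "hier_weight C children rep v (rep c) = of_bool (v \<in> rep ` children c)"
proof (cases "v \<in> rep ` children c")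
  case True
  then obtain d where d: "d \<in> children c" "v = rep d" by blast
  with children_level_set[OF c] have "d \<in> C" "lev d = l"
    unfolding level_set_def by auto
  with d c show ?thesis
    unfolding hier_weight_def by (simp add: layer_rep the_inv_into_f_f[OF rep_inj])
next
  case False
  then show ?thesis
    unfolding hier_weight_def using c by (auto simp: the_inv_into_f_f[OF rep_inj])
qed

lemma potential_rep:
  assumes "c \<in> C" and "lev c = Suc l"
  shows "(\<Sum>v\<in>layer_neurons n l. hier_weight C children rep v (rep c) * (if y v then 1 else 0))
         = real (card {d \<in> children c. y (rep d)})"
proof -
  have sub: "rep ` children c \<subseteq> layer_neurons n l"
    using children_level_set(1)[OF assms] rep_layer unfolding level_set_def by auto
  have inj: "inj_on rep (children c)"
    using children_level_set(1)[OF assms] by (auto simp: level_set_def intro: inj_on_subset[OF rep_inj])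
  have "(\<Sum>v\<in>layer_neurons n l. hier_weight C children rep v (rep c) * (if y v then 1 else 0))
      = (\<Sum>v\<in>layer_neurons n l. of_bool (v \<in> rep ` children c \<and> y v))"
    by (rule sum.cong) (simp_all add: hier_weight_rep[OF assms])
  also have "\<dots> = real (card (rep ` {d \<in> children c. y (rep d)}))"
  proof -
    have "layer_neurons n l \<inter> {v. v \<in> rep ` children c \<and> y v} = rep ` {d \<in> children c. y (rep d)}"
      using sub by auto
    then show ?thesis by (simp add: finite_layer_neurons)
  qed
  also have "\<dots> = real (card {d \<in> children c. y (rep d)})"
    using inj by (simp add: card_image inj_on_subset)
  finally show ?thesis .
qed

lemma input_fires_iff:
  assumes pres: "presented n rep0 B y t" and B: "B \<subseteq> level_set C lev 0"
    and c: "c \<in> level_set C lev 0"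
  shows "y t (rep c) \<longleftrightarrow> c \<in> B"
proof -
  have C_D: "level_set C lev 0 \<subseteq> level_set D lev 0"
    using hierarchy unfolding concept_hierarchy_def level_set_def by auto
  have "rep0 c \<in> layer_neurons n 0"
    using rep0_bij c C_D by (auto dest: bij_betwE)
  then have "y t (rep0 c) \<longleftrightarrow> rep0 c \<in> rep0 ` B"
    using pres unfolding presented_def by blast
  also have "\<dots> \<longleftrightarrow> c \<in> B"
    using c B C_D by (intro inj_on_image_mem_iff[OF bij_betw_imp_inj_on[OF rep0_bij]]) auto
  finally show ?thesis
    using rep_input c by simp
qed

lemma rep_fires_iff:
  assumes run: "net_run lmax n (hier_weight C children rep) \<tau> y"
    and c: "c \<in> C" "lev c = Suc l"
  shows "y (Suc t) (rep c) \<longleftrightarrow> \<tau> \<le> real (card {d \<in> children c. y t (rep d)})"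
  using run rep_in_neurons[OF c(1)] layer_rep[OF c(1)] potential_rep[OF c]
  unfolding net_run_def c(2) by auto

context
  fixes \<tau> :: real and y :: "nat \<Rightarrow> neuron \<Rightarrow> bool" and B :: "'c set" and t :: nat
  assumes run: "net_run lmax n (hier_weight C children rep) \<tau> y"
    and pres: "presented n rep0 B y t" and B: "B \<subseteq> level_set C lev 0"
begin

lemma rep_fires_if_supp_level:
  assumes "\<tau> \<le> r * real k" and "c \<in> supp_level C lev children k r B l"
  shows "y (t + l) (rep c)"
  using assms(2)
proof (induction l arbitrary: c)
  case 0
  with input_fires_iff[OF pres B] show ?case
    by (simp add: level_set_def)
next
  case (Suc l)
  then have c: "c \<in> C" "lev c = Suc l"
    and supp: "r * real k \<le> real (card (children c \<inter> supp_level C lev children k r B l))"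
    by (auto simp: level_set_def)
  have "children c \<inter> supp_level C lev children k r B l \<subseteq> {d \<in> children c. y (t + l) (rep d)}"
    using Suc.IH by blast
  then have "card (children c \<inter> supp_level C lev children k r B l)
      \<le> card {d \<in> children c. y (t + l) (rep d)}"
    by (rule card_mono[rotated]) (simp add: children_level_set(2)[OF c])
  with supp assms(1) show ?case
    using rep_fires_iff[OF run c, of "t + l"] by simp
qed

lemma supp_level_if_rep_fires:
  assumes "r * real k \<le> \<tau>" and "c \<in> C" and "lev c = l" and "y (t + l) (rep c)"
  shows "c \<in> supp_level C lev children k r B l"
  using assms(2-4)
proof (induction l arbitrary: c)
  case 0
  with input_fires_iff[OF pres B] show ?case
    by (simp add: level_set_def)
next
  case (Suc l)
  have fired: "{d \<in> children c. y (t + l) (rep d)} \<subseteq> children c \<inter> supp_level C lev children k r B l"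
    using Suc.IH children_level_set(1)[OF Suc.prems(1,2)] by (auto simp: level_set_def)
  have "\<tau> \<le> real (card {d \<in> children c. y (t + l) (rep d)})"
    using rep_fires_iff[OF run Suc.prems(1,2)] Suc.prems(3) by simp
  also have "\<dots> \<le> real (card (children c \<inter> supp_level C lev children k r B l))"
    using fired children_level_set(2)[OF Suc.prems(1,2)] by (simp add: card_mono)
  finally show ?case
    using assms(1) Suc.prems(1,2) by (simp add: level_set_def)
qed

end

lemma recognizes_via_rep:
  assumes "r1 * real k \<le> \<tau>" and "\<tau> \<le> r2 * real k" and "c \<in> C"
  shows "recognizes_via lmax n (hier_weight C children rep) \<tau> rep0 lmax k C lev children r1 r2 c (rep c)"
  unfolding recognizes_via_def
  using rep_in_neurons assms rep_fires_if_supp_level supp_level_if_rep_fires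
  by (auto simp: layer_rep mem_supported_iff lev_le_lmax)

end

theorem mainTheorem2:
  fixes lmax n k :: nat
    and D C :: "'c set" and lev :: "'c \<Rightarrow> nat" and children :: "'c \<Rightarrow> 'c set"
    and r1 r2 :: real
    and rep0 rep :: "'c \<Rightarrow> neuron"
  assumes "0 < lmax" and "0 < n" and "0 < k"
    and "concept_hierarchy lmax n k D lev C children"
    and "0 \<le> r1" and "r1 \<le> r2" and "r2 \<le> 1"
    and "bij_betw rep0 (level_set D lev 0) (layer_neurons n 0)"
    and "\<forall>c\<in>C. rep c \<in> layer_neurons n (lev c)"
    and "inj_on rep C"
    and "\<forall>c\<in>level_set C lev 0. rep c = rep0 c"
  shows "recognizes_hierarchy lmax n (hier_weight C children rep) ((r1 + r2) * real k / 2)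
           rep0 lmax k C lev children r1 r2
         \<and> (\<forall>c\<in>C. recognizes_via lmax n (hier_weight C children rep) ((r1 + r2) * real k / 2)
                     rep0 lmax k C lev children r1 r2 c (rep c)
                   \<and> layer (rep c) \<le> lmax)"
proof -
  interpret hierarchy_network lmax n k D C lev children rep0 rep
    using assms(4,8-11) by unfold_locales
  have "r1 * real k \<le> (r1 + r2) * real k / 2" and "(r1 + r2) * real k / 2 \<le> r2 * real k"
    using assms(6) by (simp_all add: field_simps mult_right_mono)
  then have "recognizes_via lmax n (hier_weight C children rep) ((r1 + r2) * real k / 2)
      rep0 lmax k C lev children r1 r2 c (rep c)" if "c \<in> C" for c
    using recognizes_via_rep that by blast
  then show ?thesis
    unfolding recognizes_hierarchy_def using layer_rep lev_le_lmax by (metis order_refl)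
qed

end
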